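(* Let $G$ be a countable discrete group acting minimally by homeomorphisms on a compact Hausdorff space $X$, and let $\mu\in P(G,C(X))$. Then for all $t\in G$ and $f\in C(X)$, in $C(X)\rtimes_\lambda G$ we have $\|\mu(f\lambda_t)\|\le\|f\|\,\|\mu\lambda_t\|$.
   Context: $(g\cdot f)(x)=f(g^{-1}x)$. $C(X)\rtimes_\lambda G$ is the reduced crossed product with canonical unitaries $\lambda_t$, $\lambda_tf\lambda_t^*=t\cdot f$; $G$ acts on it by $t\cdot a=\lambda_ta\lambda_t^*$. A generalized $(G,C(X))$-probability measure is a formal sum $\mu=\sum_{i\in I}f_is_if_i$ with $I$ an index set, $s_i\in G$ (repetitions allowed), $f_i\in C(X)$, $f_i\ge0$, $f_i\ne0$, $\sum_if_i^2=1$ (norm-convergent); $P(G,C(X))$ is the set of these; $\mu a=\sum_if_i(s_i\cdot a)f_i$. *)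

theory Defs
  imports "HOL-Analysis.Analysis" "HOL-Library.Countable"
begin

text \<open>The discrete group G is a type of class group_add (written additively, not
necessarily commutative): s + t is the product st, -s the inverse, 0 the unit.\<close>

definition group_action :: "('g::group_add \<Rightarrow> 'x::topological_space \<Rightarrow> 'x) \<Rightarrow> bool" where
  "group_action act \<longleftrightarrow> (\<forall>y. act 0 y = y) \<and> (\<forall>s t y. act (s + t) y = act s (act t y))
      \<and> (\<forall>s. continuous_on UNIV (act s))"

definition minimal_action :: "('g::group_add \<Rightarrow> 'x::topological_space \<Rightarrow> 'x) \<Rightarrow> bool" where
  "minimal_action act \<longleftrightarrow> (\<forall>y. closure (range (\<lambda>g. act g y)) = UNIV)"

text \<open>Generalized (G,C(X))-probability measure mu = sum_i f_i s_i f_i, indexed by the type 'i.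
 sum_i f_i^2 = 1 in sup norm, unconditionally (net of finite subsets).\<close>

definition gen_prob_measure :: "('i \<Rightarrow> 'g) \<Rightarrow> ('i \<Rightarrow> 'x::topological_space \<Rightarrow> real) \<Rightarrow> bool" where
  "gen_prob_measure s fs \<longleftrightarrow>
     (\<forall>i. continuous_on UNIV (fs i) \<and> (\<forall>y. fs i y \<ge> 0) \<and> fs i \<noteq> (\<lambda>y. 0)) \<and>
     uniform_limit UNIV (\<lambda>F y. \<Sum>i\<in>F. (fs i y)\<^sup>2) (\<lambda>y. 1) (finite_subsets_at_top UNIV)"

text \<open>Elements of the reduced crossed product C(X) x|_lambda G are represented via the faithful
 representation  (+)_{x in X} Ind(ev_x)  on  (+)_x l^2(G):
   pi_x(f) delta_g = f(g.x) delta_g,  lambda_t delta_g = delta_{tg}.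
 An element a is stored as its family of matrix coefficients
   M a x h g = < (pi_x x| lambda)(a) delta_g, delta_h >.\<close>

type_synonym ('x,'g) cp_elem = "'x \<Rightarrow> 'g \<Rightarrow> 'g \<Rightarrow> complex"

definition cp_fl :: "('g::group_add \<Rightarrow> 'x \<Rightarrow> 'x) \<Rightarrow> ('x \<Rightarrow> complex) \<Rightarrow> 'g \<Rightarrow> ('x,'g) cp_elem" where
  "cp_fl act f t = (\<lambda>x h g. if h = t + g then f (act h x) else 0)"

definition cp_lambda :: "'g::group_add \<Rightarrow> ('x,'g) cp_elem" where
  "cp_lambda t = (\<lambda>x h g. if h = t + g then 1 else 0)"

text \<open>mu a = sum_i f_i (s_i . a) f_i  where s . a = lambda_s a lambda_s^*;
 its matrix coefficients are the (convergent) sums of those of the summands.\<close>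
definition mu_apply :: "('g::group_add \<Rightarrow> 'x \<Rightarrow> 'x) \<Rightarrow> ('i \<Rightarrow> 'g) \<Rightarrow> ('i \<Rightarrow> 'x \<Rightarrow> real)
     \<Rightarrow> ('x,'g) cp_elem \<Rightarrow> ('x,'g) cp_elem" where
  "mu_apply act s fs a = (\<lambda>x h g. \<Sum>\<^sub>\<infinity>i. complex_of_real (fs i (act h x))
        * a x (- s i + h) (- s i + g) * complex_of_real (fs i (act g x)))"

definition l2_unit_fin :: "('g \<Rightarrow> complex) \<Rightarrow> bool" where
  "l2_unit_fin v \<longleftrightarrow> finite {g. v g \<noteq> 0} \<and> (\<Sum>g\<in>{g. v g \<noteq> 0}. (cmod (v g))\<^sup>2) \<le> 1"

definition mat_opnorm :: "('g \<Rightarrow> 'g \<Rightarrow> complex) \<Rightarrow> real" where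
  "mat_opnorm M = Sup {cmod (\<Sum>h\<in>{h. \<eta> h \<noteq> 0}. \<Sum>g\<in>{g. \<xi> g \<noteq> 0}. cnj (\<eta> h) * M h g * \<xi> g)
       | \<xi> \<eta>. l2_unit_fin \<xi> \<and> l2_unit_fin \<eta>}"

definition cp_norm :: "('x,'g) cp_elem \<Rightarrow> real" where
  "cp_norm a = (SUP x. mat_opnorm (a x))"

end

theory Submission
  imports Defs
begin

text \<open>At every point x the matrix of mu(lambda_t) has the nonnegative entries
  r h g = sum_i f_i(h.x) f_i(g.x) over those i for which lambda_t maps the basis vector
  at s_i^-1 g to the one at s_i^-1 h, while the corresponding entry of mu(f lambda_t) is the
  same sum weighted by values of f, hence of modulus at most ||f|| r h g. The bilinear form of
  a nonnegative matrix is maximised on nonnegative vectors, so entrywise domination by ||f|| r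
  bounds the operator norm by ||f|| times that of mu(lambda_t). The supremum over x needs
  mu(lambda_t) to be bounded: for each i the indices form a partial matching, so AM-GM and
  sum_i f_i^2 = 1 bound its bilinear form on unit vectors by 1.\<close>

lemma has_sum_sum:
  fixes f :: "'k \<Rightarrow> 'i \<Rightarrow> 'a::{topological_comm_monoid_add, t2_space}"
  assumes "finite K" "\<And>k. k \<in> K \<Longrightarrow> (f k has_sum S k) A"
  shows "((\<lambda>i. \<Sum>k\<in>K. f k i) has_sum (\<Sum>k\<in>K. S k)) A"
  using assms
proof (induction K rule: finite_induct)
  case (insert k K)
  have "((\<lambda>i. f k i + (\<Sum>k\<in>K. f k i)) has_sum (S k + (\<Sum>k\<in>K. S k))) A"
    by (intro has_sum_add) (use insert in auto)
  with insert show ?case by simp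
qed simp

lemma summable_on_masked_product:
  fixes a b :: "'i \<Rightarrow> real"
  assumes "\<And>i. a i \<ge> 0" "\<And>i. b i \<ge> 0"
    and "(\<lambda>i. (a i)\<^sup>2) summable_on A" "(\<lambda>i. (b i)\<^sup>2) summable_on A"
  shows "(\<lambda>i. if P i then a i * b i else 0) summable_on A"
proof (rule summable_on_comparison_test)
  show "(\<lambda>i. (a i)\<^sup>2 + (b i)\<^sup>2) summable_on A"
    using assms(3,4) by (rule summable_on_add)
  fix i
  have "a i * b i \<le> (a i)\<^sup>2 + (b i)\<^sup>2"
    using sum_squares_bound[of "a i" "b i"] mult_nonneg_nonneg[OF assms(1,2), of i i] by linarith
  then show "(if P i then a i * b i else 0) \<le> (a i)\<^sup>2 + (b i)\<^sup>2"
    by auto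
  show "0 \<le> (if P i then a i * b i else 0)"
    using assms(1,2)[of i] by auto
qed

lemma sum_sum_if_functional_le:
  fixes X :: "'h \<Rightarrow> real"
  assumes "finite G" "\<And>h g1 g2. P h g1 \<Longrightarrow> P h g2 \<Longrightarrow> g1 = g2" "\<And>h. X h \<ge> 0"
  shows "(\<Sum>h\<in>H. \<Sum>g\<in>G. if P h g then X h else 0) \<le> (\<Sum>h\<in>H. X h)"
proof (rule sum_mono)
  fix h
  have "card {g\<in>G. P h g} \<le> Suc 0"
    using assms(1,2) by (subst card_le_Suc0_iff_eq) auto
  then have "real (card {g\<in>G. P h g}) * X h \<le> X h"
    using assms(3)[of h] mult_right_mono[of "real (card {g\<in>G. P h g})" 1 "X h"] by linarith
  then show "(\<Sum>g\<in>G. if P h g then X h else 0) \<le> X h"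
    by (simp add: sum.inter_filter[symmetric, OF assms(1)])
qed

lemma sum_partial_matching_le:
  fixes x :: "'h \<Rightarrow> real" and y :: "'g \<Rightarrow> real"
  assumes "finite H" "finite G"
    and "\<And>h g1 g2. P h g1 \<Longrightarrow> P h g2 \<Longrightarrow> g1 = g2"
    and "\<And>h1 h2 g. P h1 g \<Longrightarrow> P h2 g \<Longrightarrow> h1 = h2"
  shows "(\<Sum>h\<in>H. \<Sum>g\<in>G. if P h g then x h * y g else 0)
           \<le> (\<Sum>h\<in>H. (x h)\<^sup>2 / 2) + (\<Sum>g\<in>G. (y g)\<^sup>2 / 2)"
proof -
  have "(\<Sum>h\<in>H. \<Sum>g\<in>G. if P h g then x h * y g else 0)
      \<le> (\<Sum>h\<in>H. \<Sum>g\<in>G. (if P h g then (x h)\<^sup>2 / 2 else 0) + (if P h g then (y g)\<^sup>2 / 2 else 0))"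
  proof (intro sum_mono)
    fix h g
    show "(if P h g then x h * y g else 0)
        \<le> (if P h g then (x h)\<^sup>2 / 2 else 0) + (if P h g then (y g)\<^sup>2 / 2 else 0)"
      using sum_squares_bound[of "x h" "y g"] by auto
  qed
  also have "\<dots> = (\<Sum>h\<in>H. \<Sum>g\<in>G. if P h g then (x h)\<^sup>2 / 2 else 0)
                + (\<Sum>g\<in>G. \<Sum>h\<in>H. if P h g then (y g)\<^sup>2 / 2 else 0)"
    by (simp add: sum.distrib sum.swap[of _ H G])
  also have "\<dots> \<le> (\<Sum>h\<in>H. (x h)\<^sup>2 / 2) + (\<Sum>g\<in>G. (y g)\<^sup>2 / 2)"
    by (intro add_mono sum_sum_if_functional_le[OF assms(2)]
          sum_sum_if_functional_le[OF assms(1), where P = "\<lambda>g h. P h g"]) (use assms(3,4) in auto)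
  finally show ?thesis .
qed

definition mat_form :: "('g \<Rightarrow> 'g \<Rightarrow> complex) \<Rightarrow> ('g \<Rightarrow> complex) \<Rightarrow> ('g \<Rightarrow> complex) \<Rightarrow> complex" where
  "mat_form M \<xi> \<eta> = (\<Sum>h\<in>{h. \<eta> h \<noteq> 0}. \<Sum>g\<in>{g. \<xi> g \<noteq> 0}. cnj (\<eta> h) * M h g * \<xi> g)"

definition abs_form :: "('g \<Rightarrow> 'g \<Rightarrow> real) \<Rightarrow> ('g \<Rightarrow> complex) \<Rightarrow> ('g \<Rightarrow> complex) \<Rightarrow> real" where
  "abs_form r \<xi> \<eta> = (\<Sum>h\<in>{h. \<eta> h \<noteq> 0}. \<Sum>g\<in>{g. \<xi> g \<noteq> 0}. cmod (\<eta> h) * r h g * cmod (\<xi> g))"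

lemma mat_opnorm_mat_form:
  "mat_opnorm M = Sup {cmod (mat_form M \<xi> \<eta>) | \<xi> \<eta>. l2_unit_fin \<xi> \<and> l2_unit_fin \<eta>}"
  by (simp add: mat_opnorm_def mat_form_def)

lemma mat_opnorm_le:
  assumes "\<And>\<xi> \<eta>. l2_unit_fin \<xi> \<Longrightarrow> l2_unit_fin \<eta> \<Longrightarrow> cmod (mat_form M \<xi> \<eta>) \<le> b"
  shows "mat_opnorm M \<le> b"
proof -
  have "l2_unit_fin (\<lambda>_. 0)" by (simp add: l2_unit_fin_def)
  then show ?thesis
    unfolding mat_opnorm_mat_form using assms by (intro cSup_least) auto
qed

lemma mat_form_le_mat_opnorm:
  assumes "\<And>\<xi> \<eta>. l2_unit_fin \<xi> \<Longrightarrow> l2_unit_fin \<eta> \<Longrightarrow> cmod (mat_form M \<xi> \<eta>) \<le> b"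
    and "l2_unit_fin \<xi>" "l2_unit_fin \<eta>"
  shows "cmod (mat_form M \<xi> \<eta>) \<le> mat_opnorm M"
  unfolding mat_opnorm_mat_form using assms
  by (intro cSup_upper) (auto simp: bdd_above_def)

lemma norm_mat_form_le_abs_form:
  assumes "\<And>h g. cmod (M h g) \<le> c * r h g" "c \<ge> 0"
  shows "cmod (mat_form M \<xi> \<eta>) \<le> c * abs_form r \<xi> \<eta>"
proof -
  have "cmod (mat_form M \<xi> \<eta>)
      \<le> (\<Sum>h\<in>{h. \<eta> h \<noteq> 0}. \<Sum>g\<in>{g. \<xi> g \<noteq> 0}. cmod (cnj (\<eta> h) * M h g * \<xi> g))"
    unfolding mat_form_def by (rule order_trans[OF norm_sum sum_mono[OF norm_sum]])
  also have "\<dots> \<le> (\<Sum>h\<in>{h. \<eta> h \<noteq> 0}. \<Sum>g\<in>{g. \<xi> g \<noteq> 0}. c * (cmod (\<eta> h) * r h g * cmod (\<xi> g)))"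
  proof (intro sum_mono)
    fix h g
    have "cmod (\<eta> h) * cmod (M h g) * cmod (\<xi> g) \<le> cmod (\<eta> h) * (c * r h g) * cmod (\<xi> g)"
      by (intro mult_right_mono mult_left_mono assms(1)) auto
    then show "cmod (cnj (\<eta> h) * M h g * \<xi> g) \<le> c * (cmod (\<eta> h) * r h g * cmod (\<xi> g))"
      by (simp add: norm_mult algebra_simps)
  qed
  also have "\<dots> = c * abs_form r \<xi> \<eta>"
    by (simp add: abs_form_def sum_distrib_left)
  finally show ?thesis .
qed

lemma l2_unit_fin_cmod:
  "l2_unit_fin v \<Longrightarrow> l2_unit_fin (\<lambda>g. complex_of_real (cmod (v g)))"
  by (simp add: l2_unit_fin_def)

lemma abs_form_eq_mat_form_cmod:
  assumes "\<And>h g. r h g \<ge> 0"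
  shows "abs_form r \<xi> \<eta> = cmod (mat_form (\<lambda>h g. complex_of_real (r h g))
           (\<lambda>g. complex_of_real (cmod (\<xi> g))) (\<lambda>h. complex_of_real (cmod (\<eta> h))))"
proof -
  have "mat_form (\<lambda>h g. complex_of_real (r h g))
      (\<lambda>g. complex_of_real (cmod (\<xi> g))) (\<lambda>h. complex_of_real (cmod (\<eta> h)))
      = complex_of_real (abs_form r \<xi> \<eta>)"
    by (simp add: mat_form_def abs_form_def)
  moreover have "abs_form r \<xi> \<eta> \<ge> 0"
    unfolding abs_form_def by (intro sum_nonneg mult_nonneg_nonneg assms) auto
  ultimately show ?thesis by simp
qed

lemma norm_mat_form_nonneg_matrix_le:
  assumes "\<And>h g. r h g \<ge> 0" "\<And>\<xi> \<eta>. l2_unit_fin \<xi> \<Longrightarrow> l2_unit_fin \<eta> \<Longrightarrow> abs_form r \<xi> \<eta> \<le> b"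
    and "l2_unit_fin \<xi>" "l2_unit_fin \<eta>"
  shows "cmod (mat_form (\<lambda>h g. complex_of_real (r h g)) \<xi> \<eta>) \<le> b"
proof -
  have "cmod (mat_form (\<lambda>h g. complex_of_real (r h g)) \<xi> \<eta>) \<le> 1 * abs_form r \<xi> \<eta>"
    by (rule norm_mat_form_le_abs_form) (simp_all add: assms(1))
  then show ?thesis using assms(2-4) by fastforce
qed

lemma mat_opnorm_nonneg_matrix_le:
  assumes "\<And>h g. r h g \<ge> 0"
    and "\<And>\<xi> \<eta>. l2_unit_fin \<xi> \<Longrightarrow> l2_unit_fin \<eta> \<Longrightarrow> abs_form r \<xi> \<eta> \<le> b"
  shows "mat_opnorm (\<lambda>h g. complex_of_real (r h g)) \<le> b"
  by (intro mat_opnorm_le norm_mat_form_nonneg_matrix_le[OF assms])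

lemma mat_opnorm_le_if_dominated:
  assumes "\<And>h g. r h g \<ge> 0" "\<And>h g. cmod (M h g) \<le> c * r h g" "c \<ge> 0"
    and "\<And>\<xi> \<eta>. l2_unit_fin \<xi> \<Longrightarrow> l2_unit_fin \<eta> \<Longrightarrow> abs_form r \<xi> \<eta> \<le> b"
  shows "mat_opnorm M \<le> c * mat_opnorm (\<lambda>h g. complex_of_real (r h g))"
proof (rule mat_opnorm_le)
  fix \<xi> \<eta> :: "'a \<Rightarrow> complex"
  assume unit: "l2_unit_fin \<xi>" "l2_unit_fin \<eta>"
  note bound = norm_mat_form_nonneg_matrix_le[OF assms(1,4)]
  have "cmod (mat_form M \<xi> \<eta>) \<le> c * abs_form r \<xi> \<eta>"
    by (rule norm_mat_form_le_abs_form[OF assms(2,3)])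
  also have "\<dots> \<le> c * mat_opnorm (\<lambda>h g. complex_of_real (r h g))"
    unfolding abs_form_eq_mat_form_cmod[OF assms(1)] using unit
    by (intro mult_left_mono assms(3) mat_form_le_mat_opnorm[OF bound] l2_unit_fin_cmod)
  finally show "cmod (mat_form M \<xi> \<eta>) \<le> c * mat_opnorm (\<lambda>h g. complex_of_real (r h g))" .
qed

lemma abs_form_matching_average_le_one:
  fixes a :: "'i \<Rightarrow> 'g \<Rightarrow> real" and P :: "'i \<Rightarrow> 'g \<Rightarrow> 'g \<Rightarrow> bool"
  assumes nonneg: "\<And>i h. a i h \<ge> 0" and sq: "\<And>h. ((\<lambda>i. (a i h)\<^sup>2) has_sum 1) UNIV"
    and functional: "\<And>i h g1 g2. P i h g1 \<Longrightarrow> P i h g2 \<Longrightarrow> g1 = g2"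
    and injective: "\<And>i h1 h2 g. P i h1 g \<Longrightarrow> P i h2 g \<Longrightarrow> h1 = h2"
    and unit: "l2_unit_fin \<xi>" "l2_unit_fin \<eta>"
  shows "abs_form (\<lambda>h g. \<Sum>\<^sub>\<infinity>i. if P i h g then a i h * a i g else 0) \<xi> \<eta> \<le> 1"
proof -
  define H where "H = {h. \<eta> h \<noteq> 0}"
  define G where "G = {g. \<xi> g \<noteq> 0}"
  define p where "p i h g = (if P i h g then a i h * a i g else 0)" for i h g
  define T where "T i = (\<Sum>h\<in>H. \<Sum>g\<in>G. cmod (\<eta> h) * p i h g * cmod (\<xi> g))" for i
  have fin: "finite H" "finite G" and norms: "(\<Sum>h\<in>H. (cmod (\<eta> h))\<^sup>2) \<le> 1" "(\<Sum>g\<in>G. (cmod (\<xi> g))\<^sup>2) \<le> 1"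
    using unit by (auto simp: H_def G_def l2_unit_fin_def)
  have "(T has_sum (\<Sum>h\<in>H. \<Sum>g\<in>G. cmod (\<eta> h) * (\<Sum>\<^sub>\<infinity>i. p i h g) * cmod (\<xi> g))) UNIV"
    unfolding T_def
  proof (intro has_sum_sum fin)
    fix h g
    have "(\<lambda>i. p i h g) summable_on UNIV"
      unfolding p_def using sq by (intro summable_on_masked_product nonneg) (auto simp: summable_on_def)
    then show "((\<lambda>i. cmod (\<eta> h) * p i h g * cmod (\<xi> g))
        has_sum cmod (\<eta> h) * (\<Sum>\<^sub>\<infinity>i. p i h g) * cmod (\<xi> g)) UNIV"
      by (intro has_sum_cmult_left has_sum_cmult_right has_sum_infsum)
  qed
  then have "(\<Sum>h\<in>H. \<Sum>g\<in>G. cmod (\<eta> h) * (\<Sum>\<^sub>\<infinity>i. p i h g) * cmod (\<xi> g)) \<le> 1"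
  proof (rule has_sum_le_finite_sums)
    fix F :: "'i set"
    assume "finite F"
    then have partial: "(\<Sum>i\<in>F. (a i y)\<^sup>2) \<le> 1" for y
      using finite_sum_le_has_sum[OF sq] by auto
    have "T i \<le> (\<Sum>h\<in>H. (cmod (\<eta> h) * a i h)\<^sup>2 / 2) + (\<Sum>g\<in>G. (a i g * cmod (\<xi> g))\<^sup>2 / 2)" for i
    proof -
      have "T i = (\<Sum>h\<in>H. \<Sum>g\<in>G. if P i h g then (cmod (\<eta> h) * a i h) * (a i g * cmod (\<xi> g)) else 0)"
        unfolding T_def p_def by (intro sum.cong refl) (simp add: ac_simps)
      also have "\<dots> \<le> (\<Sum>h\<in>H. (cmod (\<eta> h) * a i h)\<^sup>2 / 2) + (\<Sum>g\<in>G. (a i g * cmod (\<xi> g))\<^sup>2 / 2)"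
        by (rule sum_partial_matching_le[OF fin functional injective])
      finally show ?thesis .
    qed
    then have "sum T F \<le> (\<Sum>i\<in>F. (\<Sum>h\<in>H. (cmod (\<eta> h) * a i h)\<^sup>2 / 2) + (\<Sum>g\<in>G. (a i g * cmod (\<xi> g))\<^sup>2 / 2))"
      by (rule sum_mono)
    also have "\<dots> = (\<Sum>h\<in>H. (cmod (\<eta> h))\<^sup>2 / 2 * (\<Sum>i\<in>F. (a i h)\<^sup>2))
                  + (\<Sum>g\<in>G. (cmod (\<xi> g))\<^sup>2 / 2 * (\<Sum>i\<in>F. (a i g)\<^sup>2))"
      by (simp add: sum.distrib power_mult_distrib sum_distrib_left sum_divide_distrib sum.swap[of _ F H] sum.swap[of _ F G] algebra_simps)
    also have "\<dots> \<le> (\<Sum>h\<in>H. (cmod (\<eta> h))\<^sup>2 / 2) + (\<Sum>g\<in>G. (cmod (\<xi> g))\<^sup>2 / 2)"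
      using partial by (intro add_mono sum_mono mult_left_le) auto
    also have "\<dots> \<le> 1"
      using norms by (simp add: sum_divide_distrib[symmetric])
    finally show "sum T F \<le> 1" .
  qed
  then show ?thesis
    by (simp add: abs_form_def H_def G_def p_def)
qed

lemma gen_prob_measure_nonneg: "gen_prob_measure s fs \<Longrightarrow> fs i y \<ge> 0"
  by (simp add: gen_prob_measure_def)

lemma gen_prob_measure_has_sum:
  assumes "gen_prob_measure s fs"
  shows "((\<lambda>i. (fs i y)\<^sup>2) has_sum 1) UNIV"
proof -
  have "uniform_limit UNIV (\<lambda>F y. \<Sum>i\<in>F. (fs i y)\<^sup>2) (\<lambda>y. 1) (finite_subsets_at_top UNIV)"
    using assms by (simp add: gen_prob_measure_def)
  from tendsto_uniform_limitI[OF this, of y] show ?thesis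
    by (simp add: has_sum_def)
qed

definition lambda_coeff :: "('g::group_add \<Rightarrow> 'x \<Rightarrow> 'x) \<Rightarrow> ('i \<Rightarrow> 'g) \<Rightarrow> ('i \<Rightarrow> 'x \<Rightarrow> real)
    \<Rightarrow> 'g \<Rightarrow> 'x \<Rightarrow> 'g \<Rightarrow> 'g \<Rightarrow> real" where
  "lambda_coeff act s fs t x h g =
     (\<Sum>\<^sub>\<infinity>i. if - s i + h = t + (- s i + g) then fs i (act h x) * fs i (act g x) else 0)"

context
  fixes act :: "'g::group_add \<Rightarrow> 'x \<Rightarrow> 'x" and s :: "'i \<Rightarrow> 'g" and fs :: "'i \<Rightarrow> 'x \<Rightarrow> real"
  assumes nonneg: "\<And>i y. fs i y \<ge> 0"
    and square_sum: "\<And>y. ((\<lambda>i. (fs i y)\<^sup>2) has_sum 1) UNIV"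
begin

lemma summable_lambda_coeff:
  "(\<lambda>i. if - s i + h = t + (- s i + g) then fs i (act h x) * fs i (act g x) else 0) summable_on UNIV"
  using square_sum by (intro summable_on_masked_product nonneg) (auto simp: summable_on_def)

lemma lambda_coeff_nonneg: "lambda_coeff act s fs t x h g \<ge> 0"
  unfolding lambda_coeff_def by (intro infsum_nonneg) (simp add: nonneg)

lemma mu_apply_cp_lambda:
  "mu_apply act s fs (cp_lambda t) x = (\<lambda>h g. complex_of_real (lambda_coeff act s fs t x h g))"
proof (intro ext)
  fix h g
  have "((\<lambda>i. complex_of_real (if - s i + h = t + (- s i + g) then fs i (act h x) * fs i (act g x) else 0))
      has_sum complex_of_real (lambda_coeff act s fs t x h g)) UNIV"
    unfolding has_sum_of_real_iff lambda_coeff_def by (rule has_sum_infsum[OF summable_lambda_coeff])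
  moreover have "(\<lambda>i. complex_of_real (fs i (act h x)) * cp_lambda t x (- s i + h) (- s i + g)
        * complex_of_real (fs i (act g x)))
      = (\<lambda>i. complex_of_real (if - s i + h = t + (- s i + g) then fs i (act h x) * fs i (act g x) else 0))"
    by (auto simp: cp_lambda_def)
  ultimately show "mu_apply act s fs (cp_lambda t) x h g = complex_of_real (lambda_coeff act s fs t x h g)"
    unfolding mu_apply_def by (simp add: infsumI)
qed

lemma norm_mu_apply_cp_fl_le:
  assumes bound: "\<And>y. cmod (f y) \<le> c"
  shows "cmod (mu_apply act s fs (cp_fl act f t) x h g) \<le> c * lambda_coeff act s fs t x h g"
proof -
  define q where "q i = complex_of_real (fs i (act h x))
    * cp_fl act f t x (- s i + h) (- s i + g) * complex_of_real (fs i (act g x))" for i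
  define p where "p i = (if - s i + h = t + (- s i + g) then fs i (act h x) * fs i (act g x) else 0)" for i
  have q_le: "norm (q i) \<le> c * p i" for i
  proof (cases "- s i + h = t + (- s i + g)")
    case True
    have "norm (q i) = fs i (act h x) * cmod (f (act (- s i + h) x)) * fs i (act g x)"
      using True by (simp add: q_def cp_fl_def norm_mult nonneg)
    also have "\<dots> \<le> fs i (act h x) * c * fs i (act g x)"
      by (intro mult_right_mono mult_left_mono bound nonneg)
    finally show ?thesis
      using True by (simp add: p_def algebra_simps)
  qed (simp add: q_def p_def cp_fl_def)
  have p_summable: "p summable_on UNIV"
    unfolding p_def by (rule summable_lambda_coeff)
  then have q_summable: "(\<lambda>i. norm (q i)) summable_on UNIV"
    by (rule summable_on_comparison_test[OF summable_on_cmult_right[where c = c]]) (auto simp: q_le)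
  have "cmod (mu_apply act s fs (cp_fl act f t) x h g) = norm (infsum q UNIV)"
    unfolding mu_apply_def q_def ..
  also have "\<dots> \<le> (\<Sum>\<^sub>\<infinity>i. norm (q i))"
    by (rule norm_infsum_bound[OF q_summable])
  also have "\<dots> \<le> (\<Sum>\<^sub>\<infinity>i. c * p i)"
    by (rule infsum_mono[OF q_summable summable_on_cmult_right[OF p_summable] q_le])
  also have "\<dots> = c * lambda_coeff act s fs t x h g"
    unfolding lambda_coeff_def p_def by (rule infsum_cmult_right[OF summable_lambda_coeff])
  finally show ?thesis .
qed

lemma abs_form_lambda_coeff_le_one:
  "l2_unit_fin \<xi> \<Longrightarrow> l2_unit_fin \<eta> \<Longrightarrow> abs_form (lambda_coeff act s fs t x) \<xi> \<eta> \<le> 1"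
  unfolding lambda_coeff_def
  by (rule abs_form_matching_average_le_one[where a = "\<lambda>i h. fs i (act h x)"])
    (auto simp: nonneg square_sum, metis add_left_cancel)

end

lemma cp_norm_le_scaled:
  assumes "\<And>x. mat_opnorm (a x) \<le> c * mat_opnorm (b x)" "\<And>x. mat_opnorm (b x) \<le> B" "c \<ge> 0"
  shows "cp_norm a \<le> c * cp_norm b"
  unfolding cp_norm_def
proof (rule cSUP_least)
  fix x
  have "bdd_above (range (\<lambda>x. mat_opnorm (b x)))"
    using assms(2) by (auto simp: bdd_above_def)
  then show "mat_opnorm (a x) \<le> c * (SUP x. mat_opnorm (b x))"
    by (intro order_trans[OF assms(1)] mult_left_mono assms(3) cSUP_upper) auto
qed simp

theorem mainTheorem14:
  fixes act :: "'g::{group_add, countable} \<Rightarrow> 'x::t2_space \<Rightarrow> 'x"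
    and s :: "'i \<Rightarrow> 'g" and fs :: "'i \<Rightarrow> 'x \<Rightarrow> real"
    and f :: "'x \<Rightarrow>\<^sub>C complex" and t :: 'g
  assumes "compact (UNIV :: 'x set)"
    and "group_action act" and "minimal_action act"
    and "gen_prob_measure s fs"
  shows "cp_norm (mu_apply act s fs (cp_fl act (apply_bcontfun f) t))
           \<le> norm f * cp_norm (mu_apply act s fs (cp_lambda t))"
proof (rule cp_norm_le_scaled)
  note mu = gen_prob_measure_nonneg[OF assms(4)] gen_prob_measure_has_sum[OF assms(4)]
  fix x
  note bound = abs_form_lambda_coeff_le_one[OF mu]
  show "mat_opnorm (mu_apply act s fs (cp_lambda t) x) \<le> 1"
    unfolding mu_apply_cp_lambda[OF mu]
    by (intro mat_opnorm_nonneg_matrix_le lambda_coeff_nonneg[OF mu] bound)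
  show "mat_opnorm (mu_apply act s fs (cp_fl act (apply_bcontfun f) t) x)
      \<le> norm f * mat_opnorm (mu_apply act s fs (cp_lambda t) x)"
    unfolding mu_apply_cp_lambda[OF mu]
    by (intro mat_opnorm_le_if_dominated[where b = 1] lambda_coeff_nonneg[OF mu]
        norm_mu_apply_cp_fl_le[OF mu] norm_bounded norm_ge_zero bound)
qed simp

end
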